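(* Let $F_1:\mathbb{H}\to\mathbb{C}$ be holomorphic and suppose that $G(a,x)=(F_1(a,x),x)$ defines a proper holomorphic map $G:\mathbb{H}\to\mathbb{H}$. Then there is a real constant $\theta$ such that $F_1(a,x)=e^{i\theta}a$ for all $(a,x)\in\mathbb{H}$.
   Context: For $x=(x_1,x_2,x_3)\in\mathbb{C}^3$ and $z,w\in\mathbb{C}$ write $D_x(z,w)=1-x_1z-x_2w+x_3zw$. The tetrablock is $\mathbb{E}=\{x\in\mathbb{C}^3: D_x(z,w)\neq0 \text{ for all } |z|\le1,|w|\le1\}$. The hexablock is \[ \mathbb{H}=\Big\{(a,x)\in\mathbb{C}\times\mathbb{E}:\ \sup_{z,w\in\mathbb{D}}\frac{|a|\sqrt{(1-|z|^2)(1-|w|^2)}}{|D_x(z,w)|}<1\Big\}\subset\mathbb{C}^4, \] with $\mathbb{D}$ the open unit disc; coordinates on $\mathbb{C}^4$ are written $(a,x)=(a,x_1,x_2,x_3)$. *)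

theory Defs
  imports "HOL-Analysis.Analysis"
begin

type_synonym c3 = "complex \<times> complex \<times> complex"
type_synonym c4 = "complex \<times> c3"

definition Dx :: "c3 \<Rightarrow> complex \<Rightarrow> complex \<Rightarrow> complex" where
  "Dx x z w = 1 - fst x * z - fst (snd x) * w + snd (snd x) * z * w"

definition tetrablock :: "c3 set" where
  "tetrablock = {x. \<forall>z w. cmod z \<le> 1 \<longrightarrow> cmod w \<le> 1 \<longrightarrow> Dx x z w \<noteq> 0}"

definition hexablock :: "c4 set" where
  "hexablock = {(a, x). x \<in> tetrablock \<and>
     (SUP zw \<in> ball (0::complex) 1 \<times> ball (0::complex) 1.
        cmod a * sqrt ((1 - (cmod (fst zw))\<^sup>2) * (1 - (cmod (snd zw))\<^sup>2))
          / cmod (Dx x (fst zw) (snd zw))) < 1}"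

definition cscale4 :: "complex \<Rightarrow> c4 \<Rightarrow> c4" where
  "cscale4 c p = (case p of (a, x1, x2, x3) \<Rightarrow> (c * a, c * x1, c * x2, c * x3))"

definition holomorphic4 :: "(c4 \<Rightarrow> complex) \<Rightarrow> c4 set \<Rightarrow> bool" where
  "holomorphic4 f S \<longleftrightarrow> (\<forall>p\<in>S. \<exists>L. (f has_derivative L) (at p) \<and>
      (\<forall>c v. L (cscale4 c v) = c * L v))"

definition proper_map :: "('a::topological_space \<Rightarrow> 'b::topological_space) \<Rightarrow> 'a set \<Rightarrow> 'b set \<Rightarrow> bool" where
  "proper_map G S T \<longleftrightarrow> G ` S \<subseteq> T \<and>
     (\<forall>K. K \<subseteq> T \<and> compact K \<longrightarrow> compact {p\<in>S. G p \<in> K})"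

end

theory Submission
  imports Defs "HOL-Complex_Analysis.Complex_Analysis"
begin

(* Write S(x) for the supremum in the definition of the hexablock, so that the fibre of the
   hexablock over x is the disc |a| < 1/S(x), and let t.x = (t x1, t x2, t^2 x3).
   Fix x with x1 /= 0 and |a| close to 1, and restrict F1 to the slice of those t with
   (a, t.x) in the hexablock. The slice is a balanced domain inside the unit disc, and |a| S(t.x)
   tends to 1 towards its boundary. Since (F1, t.x) stays in the hexablock, |F1| is asymptotically
   at most |a| there; properness makes |F1| asymptotically at least |a| and keeps F1 away from 0.
   The maximum modulus principle for F1 and 1/F1 then shows that F1(a, t.x) does not depend on t,
   so it equals F1(a, 0). Hence |F1(a, 0)| = |a| near the unit circle, which forces
   F1(a, 0) = c a with |c| = 1. Analytic continuation, first in a over t.x for small t and then in t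
   along the slice, gives F1 = c a wherever x1 /= 0, and continuity gives it everywhere. *)

lemma abs_diff_divide_le:
  fixes s d e m N :: real
  assumes "0 \<le> s" "s \<le> 1" "m > 0" "m \<le> d" "m / 2 \<le> e" "\<bar>d - e\<bar> \<le> N"
  shows "\<bar>s / e - s / d\<bar> \<le> 2 * N / m\<^sup>2"
proof -
  have pos: "d > 0" "e > 0" using assms by auto
  have "s / e - s / d = s * (d - e) / (d * e)"
    using pos by (simp add: field_simps)
  then have "\<bar>s / e - s / d\<bar> = s * \<bar>d - e\<bar> / (d * e)"
    using pos assms(1) by (simp add: abs_mult)
  also have "\<dots> \<le> N / (d * e)"
  proof (rule divide_right_mono)
    have "s * \<bar>d - e\<bar> \<le> 1 * \<bar>d - e\<bar>" using assms(2) by (rule mult_right_mono) simp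
    then show "s * \<bar>d - e\<bar> \<le> N" using assms(6) by simp
  qed (use pos in simp)
  also have "\<dots> \<le> N / (m * (m / 2))"
  proof (rule divide_left_mono)
    show "m * (m / 2) \<le> d * e" using assms(3-5) by (intro mult_mono) auto
  qed (use assms pos in auto)
  also have "\<dots> = 2 * N / m\<^sup>2" by (simp add: power2_eq_square)
  finally show ?thesis .
qed

lemma cSUP_mult_left_nonneg:
  fixes f :: "'a \<Rightarrow> real"
  assumes "A \<noteq> {}" "bdd_above (f ` A)" "0 \<le> c"
  shows "(SUP x\<in>A. c * f x) = c * (SUP x\<in>A. f x)"
proof (cases "c = 0")
  case True
  then show ?thesis using assms(1) by simp
next
  case False
  then have c: "c > 0" using assms(3) by simp
  obtain M where "\<And>x. x \<in> A \<Longrightarrow> f x \<le> M"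
    using assms(2) by (auto simp: bdd_above_def)
  then have bdd: "bdd_above ((\<lambda>x. c * f x) ` A)"
    using c by (intro bdd_aboveI[of _ "c * M"]) (auto intro: mult_left_mono)
  show ?thesis
  proof (rule antisym)
    show "(SUP x\<in>A. c * f x) \<le> c * (SUP x\<in>A. f x)"
      using assms c by (intro cSUP_least mult_left_mono cSUP_upper) auto
    have "(SUP x\<in>A. f x) \<le> (SUP x\<in>A. c * f x) / c"
      using assms(1) c cSUP_upper[OF _ bdd] by (intro cSUP_least) (auto simp: field_simps)
    then show "c * (SUP x\<in>A. f x) \<le> (SUP x\<in>A. c * f x)"
      using c by (simp add: field_simps)
  qed
qed

lemma eq_if_isCont_eventually_eq:
  fixes f :: "'a::{perfect_space, t2_space} \<Rightarrow> 'b::t2_space"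
  assumes "isCont f z" "eventually (\<lambda>w. f w = y) (at z)"
  shows "f z = y"
  using assms(1) tendsto_eventually[OF assms(2)] unfolding isCont_def
  by (rule tendsto_unique[OF at_neq_bot])

lemma balanced_imp_connected:
  fixes S :: "complex set"
  assumes "0 \<in> S" "\<And>t u. t \<in> S \<Longrightarrow> cmod u \<le> 1 \<Longrightarrow> u * t \<in> S"
  shows "connected S"
proof (rule starlike_imp_connected)
  have "closed_segment 0 t \<subseteq> S" if "t \<in> S" for t
  proof
    fix y assume "y \<in> closed_segment 0 t"
    then obtain u :: real where "0 \<le> u" "u \<le> 1" "y = of_real u * t"
      unfolding closed_segment_def by (auto simp: scaleR_conv_of_real)
    then show "y \<in> S" using assms(2)[OF that, of "of_real u"] by simp
  qed
  then show "starlike S" unfolding starlike_def using assms(1) by blast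
qed

lemma maximum_modulus_boundary_limsup:
  fixes f :: "complex \<Rightarrow> complex"
  assumes hol: "f holomorphic_on \<Omega>" and op: "open \<Omega>"
    and bd: "\<And>\<epsilon>. \<epsilon> > 0 \<Longrightarrow> \<exists>K. compact K \<and> K \<subseteq> \<Omega> \<and> (\<forall>t\<in>\<Omega> - K. cmod (f t) \<le> M + \<epsilon>)"
    and t0: "t0 \<in> \<Omega>"
  shows "cmod (f t0) \<le> M"
proof (rule ccontr)
  assume "\<not> cmod (f t0) \<le> M"
  then have gt: "M < cmod (f t0)" by simp
  define \<epsilon> where "\<epsilon> = (cmod (f t0) - M) / 2"
  have \<epsilon>: "\<epsilon> > 0" using gt unfolding \<epsilon>_def by simp
  obtain K where K: "compact K" "K \<subseteq> \<Omega>" "\<forall>t\<in>\<Omega> - K. cmod (f t) \<le> M + \<epsilon>"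
    using bd[OF \<epsilon>] by blast
  define U where "U = \<Omega> \<inter> (\<lambda>t. cmod (f t)) -` {M + \<epsilon><..}"
  have contf: "continuous_on \<Omega> f" by (rule holomorphic_on_imp_continuous_on[OF hol])
  have openU: "open U" unfolding U_def
    by (rule continuous_open_preimage[OF _ op open_greaterThan]) (intro continuous_intros contf)
  have UK: "U \<subseteq> K" using K(3) unfolding U_def by force
  have clU: "closure U \<subseteq> \<Omega>"
    using closure_minimal[OF UK compact_imp_closed[OF K(1)]] K(2) by blast
  have "cmod (f t0) \<le> M + \<epsilon>"
  proof (rule maximum_modulus_frontier[of f U])
    show "f holomorphic_on interior U"
      unfolding interior_open[OF openU] by (rule holomorphic_on_subset[OF hol]) (auto simp: U_def)
    show "continuous_on (closure U) f" by (rule continuous_on_subset[OF contf clU])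
    show "bounded U" by (rule bounded_subset[OF compact_imp_bounded[OF K(1)] UK])
    have "M + \<epsilon> < cmod (f t0)" using gt unfolding \<epsilon>_def by (simp add: field_simps)
    then show "t0 \<in> U" unfolding U_def using t0 by simp
  next
    fix w assume "w \<in> frontier U"
    then have "w \<in> \<Omega>" "w \<notin> U" using clU unfolding frontier_def interior_open[OF openU] by auto
    then show "cmod (f w) \<le> M + \<epsilon>" unfolding U_def by auto
  qed
  then show False using gt unfolding \<epsilon>_def by (simp add: field_simps)
qed

lemma annulus_contains_ball:
  assumes "0 \<le> r" "r < R"
  obtains z :: complex and \<rho> where "\<rho> > 0" "ball z \<rho> \<subseteq> {b. r < cmod b \<and> cmod b < R}"
proof
  define z where "z = complex_of_real ((r + R) / 2)"
  have z: "cmod z = (r + R) / 2"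
    unfolding z_def norm_of_real using assms by simp
  show "ball z ((R - r) / 2) \<subseteq> {b. r < cmod b \<and> cmod b < R}"
  proof
    fix b assume "b \<in> ball z ((R - r) / 2)"
    then have "cmod (z - b) < (R - r) / 2"
      by (simp only: mem_ball dist_norm)
    then show "b \<in> {b. r < cmod b \<and> cmod b < R}"
      using z norm_triangle_ineq2[of b z] norm_triangle_ineq2[of z b] norm_minus_commute[of b z]
      by simp
  qed
qed (use assms in simp)

lemma holomorphic_eq_if_eq_on_annulus:
  assumes f: "f holomorphic_on ball 0 R" and g: "g holomorphic_on ball 0 R" and r: "0 \<le> r" "r < R"
    and eq: "\<And>b. r < cmod b \<Longrightarrow> cmod b < R \<Longrightarrow> f b = g b"
    and b: "cmod b < R"
  shows "f b = g b"
proof -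
  obtain z \<rho> where \<rho>: "\<rho> > 0" and sub: "ball z \<rho> \<subseteq> {b. r < cmod b \<and> cmod b < R}"
    using annulus_contains_ball[OF r] .
  show ?thesis
  proof (rule analytic_continuation_open[of "ball z \<rho>" "ball 0 R" f g])
    show "ball z \<rho> \<noteq> {}" using \<rho> by simp
    show "ball z \<rho> \<subseteq> ball 0 R" using sub by auto
    show "\<And>w. w \<in> ball z \<rho> \<Longrightarrow> f w = g w" using sub eq by blast
  qed (use f g b in auto)
qed

lemma rotation_if_norm_eq_on_annulus:
  fixes f :: "complex \<Rightarrow> complex"
  assumes hol: "f holomorphic_on ball 0 1" and r: "0 \<le> r" "r < 1"
    and norm_eq: "\<And>b. r < cmod b \<Longrightarrow> cmod b < 1 \<Longrightarrow> cmod (f b) = cmod b"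
  obtains c where "cmod c = 1" "\<And>b. cmod b < 1 \<Longrightarrow> f b = c * b"
proof -
  obtain z \<rho> where \<rho>: "\<rho> > 0" and sub: "ball z \<rho> \<subseteq> {b. r < cmod b \<and> cmod b < 1}"
    using annulus_contains_ball[OF r] .
  have B: "r < cmod b" "cmod b < 1" if "b \<in> ball z \<rho>" for b
    using sub that by auto
  then have B0: "b \<noteq> 0" if "b \<in> ball z \<rho>" for b
    using that r by fastforce
  have z: "z \<in> ball z \<rho>" using \<rho> by simp
  have "(\<lambda>b. f b / b) holomorphic_on ball z \<rho>"
    using B B0 by (intro holomorphic_intros holomorphic_on_subset[OF hol]) auto
  moreover have "cmod (f b / b) = 1" if "b \<in> ball z \<rho>" for b
    using norm_eq[OF B[OF that]] B0[OF that] by (simp add: norm_divide)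
  ultimately have "(\<lambda>b. f b / b) constant_on ball z \<rho>"
    using z by (intro maximum_modulus_principle[of _ "ball z \<rho>" "ball z \<rho>" z]) auto
  then obtain c where c: "\<And>b. b \<in> ball z \<rho> \<Longrightarrow> f b / b = c" by (auto simp: constant_on_def)
  show thesis
  proof
    show "cmod c = 1" using c[OF z] norm_eq[OF B[OF z]] B0[OF z]
      by (auto simp: norm_divide)
    fix b :: complex assume "cmod b < 1"
    show "f b = c * b"
    proof (rule analytic_continuation_open[of "ball z \<rho>" "ball 0 1" f "\<lambda>b. c * b"])
      show "ball z \<rho> \<noteq> {}" using z by blast
      show "ball z \<rho> \<subseteq> ball 0 1" using B by auto
      show "f w = c * w" if "w \<in> ball z \<rho>" for w
        using c[OF that] B0[OF that] by (auto simp: field_simps)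
    qed (use hol \<open>cmod b < 1\<close> in \<open>auto intro: holomorphic_intros\<close>)
  qed
qed

lemma has_derivative_quadruple:
  assumes "(f has_field_derivative d0) (at t)" "(g has_field_derivative d1) (at t)"
    "(h has_field_derivative d2) (at t)" "(k has_field_derivative d3) (at t)"
  shows "((\<lambda>t. (f t, g t, h t, k t)) has_derivative (\<lambda>h. cscale4 h (d0, d1, d2, d3))) (at t)"
proof -
  have "((\<lambda>t. (f t, g t, h t, k t)) has_derivative (\<lambda>h. (d0 * h, d1 * h, d2 * h, d3 * h))) (at t)"
    by (intro has_derivative_Pair has_field_derivative_imp_has_derivative assms)
  moreover have "(\<lambda>h. (d0 * h, d1 * h, d2 * h, d3 * h)) = (\<lambda>h. cscale4 h (d0, d1, d2, d3))"
    by (auto simp: cscale4_def mult.commute)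
  ultimately show ?thesis by simp
qed

lemma holomorphic4_compose:
  assumes F: "holomorphic4 F S" and T: "open T"
    and hol: "f holomorphic_on T" "g holomorphic_on T" "h holomorphic_on T" "k holomorphic_on T"
    and into: "\<And>t. t \<in> T \<Longrightarrow> (f t, g t, h t, k t) \<in> S"
  shows "(\<lambda>t. F (f t, g t, h t, k t)) holomorphic_on T"
  unfolding holomorphic_on_open[OF T]
proof
  fix t assume t: "t \<in> T"
  obtain d0 d1 d2 d3 where "(f has_field_derivative d0) (at t)" "(g has_field_derivative d1) (at t)"
    "(h has_field_derivative d2) (at t)" "(k has_field_derivative d3) (at t)"
    using hol t T unfolding holomorphic_on_open[OF T] by metis
  then have curve: "((\<lambda>t. (f t, g t, h t, k t)) has_derivative (\<lambda>h. cscale4 h (d0, d1, d2, d3))) (at t)"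
    by (rule has_derivative_quadruple)
  obtain L where L: "(F has_derivative L) (at (f t, g t, h t, k t))"
    and lin: "\<And>c v. L (cscale4 c v) = c * L v"
    using F into[OF t] unfolding holomorphic4_def by blast
  have "(\<lambda>h. L (cscale4 h (d0, d1, d2, d3))) = (*) (L (d0, d1, d2, d3))"
    by (auto simp: lin mult.commute)
  then have "((\<lambda>t. F (f t, g t, h t, k t)) has_field_derivative L (d0, d1, d2, d3)) (at t)"
    using diff_chain_at[OF curve L] by (simp add: has_field_derivative_def comp_def)
  then show "\<exists>D. ((\<lambda>t. F (f t, g t, h t, k t)) has_field_derivative D) (at t)" ..
qed

lemma isCont_if_holomorphic4: "holomorphic4 F S \<Longrightarrow> p \<in> S \<Longrightarrow> isCont F p"
  unfolding holomorphic4_def by (metis has_derivative_continuous)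

section \<open>The supremum defining the hexablock\<close>

definition hexa_quot :: "c3 \<Rightarrow> complex \<Rightarrow> complex \<Rightarrow> real" where
  "hexa_quot x z w = sqrt ((1 - (cmod z)\<^sup>2) * (1 - (cmod w)\<^sup>2)) / cmod (Dx x z w)"

definition hexa_sup :: "c3 \<Rightarrow> real" where
  "hexa_sup x = (SUP zw \<in> ball 0 1 \<times> ball 0 1. hexa_quot x (fst zw) (snd zw))"

lemma norm_Dx_diff_le:
  assumes "cmod z \<le> 1" "cmod w \<le> 1"
  shows "cmod (Dx x z w - Dx y z w) \<le> 3 * dist x y"
proof -
  obtain x1 x2 x3 y1 y2 y3 where xy: "x = (x1, x2, x3)" "y = (y1, y2, y3)"
    by (cases x, cases y) auto
  have d: "cmod (x1 - y1) \<le> dist x y" "cmod (x2 - y2) \<le> dist x y" "cmod (x3 - y3) \<le> dist x y"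
    using dist_fst_le[of x y] dist_fst_le[of "snd x" "snd y"] dist_snd_le[of "snd x" "snd y"]
      dist_snd_le[of x y] by (auto simp: xy dist_norm)
  have zw: "cmod z * cmod w \<le> 1"
    using assms by (simp add: mult_le_one)
  have "Dx x z w - Dx y z w = (x3 - y3) * (z * w) - (x1 - y1) * z - (x2 - y2) * w"
    by (simp add: xy Dx_def algebra_simps)
  also have "cmod \<dots> \<le> cmod (x3 - y3) * (cmod z * cmod w) + cmod (x1 - y1) * cmod z + cmod (x2 - y2) * cmod w"
    unfolding norm_mult[symmetric]
    by (intro order_trans[OF norm_triangle_ineq4] add_mono order_trans[OF norm_triangle_ineq4]) auto
  also have "\<dots> \<le> cmod (x3 - y3) + cmod (x1 - y1) + cmod (x2 - y2)"
    using assms zw by (intro add_mono mult_left_le) auto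
  finally show ?thesis using d by linarith
qed

lemma tetrablock_Dx_bounded_below:
  assumes "x \<in> tetrablock"
  obtains m where "m > 0" "\<And>z w. cmod z \<le> 1 \<Longrightarrow> cmod w \<le> 1 \<Longrightarrow> m \<le> cmod (Dx x z w)"
proof -
  let ?K = "cball (0::complex) 1 \<times> cball (0::complex) 1"
  have "continuous_on ?K (\<lambda>zw. cmod (Dx x (fst zw) (snd zw)))"
    unfolding Dx_def by (intro continuous_intros)
  moreover have "compact ?K" "?K \<noteq> {}" by (auto simp: compact_Times)
  ultimately obtain p where p: "p \<in> ?K"
    and min: "\<forall>q\<in>?K. cmod (Dx x (fst p) (snd p)) \<le> cmod (Dx x (fst q) (snd q))"
    using continuous_attains_inf[of ?K] by blast
  have "Dx x (fst p) (snd p) \<noteq> 0"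
    using assms p unfolding tetrablock_def by (auto simp: mem_Times_iff)
  then show thesis
    using that[of "cmod (Dx x (fst p) (snd p))"] min by auto
qed

lemma bidisc_weight_bounds:
  assumes "cmod z < 1" "cmod w < 1"
  shows "0 \<le> sqrt ((1 - (cmod z)\<^sup>2) * (1 - (cmod w)\<^sup>2))"
    and "sqrt ((1 - (cmod z)\<^sup>2) * (1 - (cmod w)\<^sup>2)) \<le> 1"
proof -
  have "0 \<le> 1 - (cmod z)\<^sup>2" "1 - (cmod z)\<^sup>2 \<le> 1" "0 \<le> 1 - (cmod w)\<^sup>2" "1 - (cmod w)\<^sup>2 \<le> 1"
    using assms by (auto simp: abs_square_le_1)
  then show "0 \<le> sqrt ((1 - (cmod z)\<^sup>2) * (1 - (cmod w)\<^sup>2))"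
    and "sqrt ((1 - (cmod z)\<^sup>2) * (1 - (cmod w)\<^sup>2)) \<le> 1"
    by (simp_all add: mult_le_one)
qed

lemma hexa_quot_le:
  assumes "m > 0" "m \<le> cmod (Dx x z w)" "cmod z < 1" "cmod w < 1"
  shows "hexa_quot x z w \<le> 1 / m"
proof -
  have "hexa_quot x z w \<le> 1 / cmod (Dx x z w)"
    unfolding hexa_quot_def using assms bidisc_weight_bounds[OF assms(3,4)]
    by (simp add: divide_right_mono)
  also have "\<dots> \<le> 1 / m" using assms by (simp add: frac_le)
  finally show ?thesis .
qed

lemma bdd_above_hexa_quot:
  assumes "x \<in> tetrablock"
  shows "bdd_above ((\<lambda>zw. hexa_quot x (fst zw) (snd zw)) ` (ball 0 1 \<times> ball 0 1))"
proof -
  obtain m where "m > 0" "\<And>z w. cmod z \<le> 1 \<Longrightarrow> cmod w \<le> 1 \<Longrightarrow> m \<le> cmod (Dx x z w)"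
    using tetrablock_Dx_bounded_below[OF assms] by blast
  then show ?thesis
    by (intro bdd_aboveI[of _ "1 / m"]) (auto intro!: hexa_quot_le)
qed

lemma hexa_quot_le_hexa_sup:
  assumes "x \<in> tetrablock" "cmod z < 1" "cmod w < 1"
  shows "hexa_quot x z w \<le> hexa_sup x"
  unfolding hexa_sup_def using cSUP_upper[OF _ bdd_above_hexa_quot[OF assms(1)], of "(z, w)"] assms
  by simp

lemma hexa_sup_le:
  assumes "\<And>z w. cmod z < 1 \<Longrightarrow> cmod w < 1 \<Longrightarrow> hexa_quot x z w \<le> M"
  shows "hexa_sup x \<le> M"
  unfolding hexa_sup_def using assms by (intro cSUP_least) auto

lemma hexa_sup_ge_1: "x \<in> tetrablock \<Longrightarrow> 1 \<le> hexa_sup x"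
  using hexa_quot_le_hexa_sup[of x 0 0] by (simp add: hexa_quot_def Dx_def)

lemma hexa_sup_locally_lipschitz:
  assumes "x \<in> tetrablock"
  obtains r C where "r > 0" "\<And>y. dist y x < r \<Longrightarrow> y \<in> tetrablock \<and> \<bar>hexa_sup y - hexa_sup x\<bar> \<le> C * dist y x"
proof -
  obtain m where m: "m > 0" "\<And>z w. cmod z \<le> 1 \<Longrightarrow> cmod w \<le> 1 \<Longrightarrow> m \<le> cmod (Dx x z w)"
    using tetrablock_Dx_bounded_below[OF assms] by blast
  have "y \<in> tetrablock \<and> \<bar>hexa_sup y - hexa_sup x\<bar> \<le> 6 / m\<^sup>2 * dist y x" if y: "dist y x < m / 6" for y
  proof -
    have Dy: "m / 2 \<le> cmod (Dx y z w)" if "cmod z \<le> 1" "cmod w \<le> 1" for z w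
      using m(2)[OF that] norm_Dx_diff_le[OF that, of x y] norm_triangle_ineq2[of "Dx x z w" "Dx y z w"] y
      by (simp add: dist_commute)
    then have yE: "y \<in> tetrablock"
      unfolding tetrablock_def using m(1) by (fastforce simp del: norm_le_zero_iff)
    have quot: "\<bar>hexa_quot y z w - hexa_quot x z w\<bar> \<le> 6 / m\<^sup>2 * dist y x" if "cmod z < 1" "cmod w < 1" for z w
    proof -
      have "\<bar>cmod (Dx x z w) - cmod (Dx y z w)\<bar> \<le> 3 * dist y x"
        using norm_Dx_diff_le[of z w x y] that norm_triangle_ineq3[of "Dx x z w" "Dx y z w"]
        by (simp add: dist_commute)
      from abs_diff_divide_le[OF bidisc_weight_bounds[OF that] m(1) m(2) Dy this] that
      show ?thesis by (simp add: hexa_quot_def)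
    qed
    have "hexa_sup y \<le> hexa_sup x + 6 / m\<^sup>2 * dist y x"
      by (rule hexa_sup_le) (use quot hexa_quot_le_hexa_sup[OF assms] in fastforce)
    moreover have "hexa_sup x \<le> hexa_sup y + 6 / m\<^sup>2 * dist y x"
      by (rule hexa_sup_le) (use quot hexa_quot_le_hexa_sup[OF yE] in fastforce)
    ultimately show ?thesis using yE by linarith
  qed
  with m(1) show thesis
    by (intro that[of "m / 6" "6 / m\<^sup>2"]) simp_all
qed

lemma open_tetrablock: "open tetrablock"
  unfolding open_dist
proof (intro ballI)
  fix x assume "x \<in> tetrablock"
  then obtain r C where "r > 0" "\<And>y. dist y x < r \<Longrightarrow> y \<in> tetrablock"
    by (rule hexa_sup_locally_lipschitz) blast
  then show "\<exists>r>0. \<forall>y. dist y x < r \<longrightarrow> y \<in> tetrablock" by blast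
qed

lemma continuous_on_hexa_sup: "continuous_on tetrablock hexa_sup"
  unfolding continuous_on_iff
proof (intro ballI allI impI)
  fix x and e :: real assume x: "x \<in> tetrablock" and e: "0 < e"
  obtain r C where r: "r > 0"
    and lip: "\<And>y. dist y x < r \<Longrightarrow> \<bar>hexa_sup y - hexa_sup x\<bar> \<le> C * dist y x"
    by (rule hexa_sup_locally_lipschitz[OF x]) blast
  define d where "d = min r (e / (\<bar>C\<bar> + 1))"
  have "dist (hexa_sup y) (hexa_sup x) < e" if y: "dist y x < d" for y
  proof -
    have "\<bar>hexa_sup y - hexa_sup x\<bar> \<le> C * dist y x"
      using lip y by (simp add: d_def)
    also have "\<dots> \<le> (\<bar>C\<bar> + 1) * dist y x"
      by (intro mult_right_mono) auto
    also have "\<dots> < (\<bar>C\<bar> + 1) * (e / (\<bar>C\<bar> + 1))"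
      using y by (intro mult_strict_left_mono) (auto simp: d_def)
    also have "\<dots> = e" by simp
    finally show ?thesis by (simp add: dist_real_def)
  qed
  moreover have "d > 0" using r e by (simp add: d_def)
  ultimately show "\<exists>d>0. \<forall>y\<in>tetrablock. dist y x < d \<longrightarrow> dist (hexa_sup y) (hexa_sup x) < e"
    by blast
qed

lemma hexablock_iff: "(a, x) \<in> hexablock \<longleftrightarrow> x \<in> tetrablock \<and> cmod a * hexa_sup x < 1"
proof (cases "x \<in> tetrablock")
  case True
  have "(SUP zw \<in> ball 0 1 \<times> ball 0 1. cmod a * sqrt ((1 - (cmod (fst zw))\<^sup>2) * (1 - (cmod (snd zw))\<^sup>2))
          / cmod (Dx x (fst zw) (snd zw))) = cmod a * hexa_sup x"
    unfolding hexa_sup_def hexa_quot_def times_divide_eq_right[symmetric]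
    by (rule cSUP_mult_left_nonneg) (use bdd_above_hexa_quot[OF True] in \<open>auto simp: hexa_quot_def\<close>)
  then show ?thesis unfolding hexablock_def by simp
qed (simp add: hexablock_def)

lemma mem_hexablock_iff: "p \<in> hexablock \<longleftrightarrow> snd p \<in> tetrablock \<and> cmod (fst p) * hexa_sup (snd p) < 1"
  using hexablock_iff[of "fst p" "snd p"] by simp

lemma open_hexablock: "open hexablock"
proof -
  have "continuous_on (UNIV \<times> tetrablock) (\<lambda>p::c4. cmod (fst p) * hexa_sup (snd p))"
    by (intro continuous_intros continuous_on_compose2[OF continuous_on_hexa_sup]) auto
  then have "open ((UNIV \<times> tetrablock) \<inter> (\<lambda>p. cmod (fst p) * hexa_sup (snd p)) -` {..<1})"
    by (rule continuous_open_preimage) (auto intro: open_Times open_tetrablock)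
  moreover have "(UNIV \<times> tetrablock) \<inter> (\<lambda>p. cmod (fst p) * hexa_sup (snd p)) -` {..<1} = hexablock"
    by (auto simp: mem_hexablock_iff)
  ultimately show ?thesis by simp
qed

lemma hexablock_fibre_eq_ball:
  assumes "x \<in> tetrablock"
  shows "{a. (a, x) \<in> hexablock} = ball 0 (1 / hexa_sup x)"
  using hexa_sup_ge_1[OF assms] assms by (auto simp: hexablock_iff field_simps)

lemma norm_less_1_if_in_hexablock:
  assumes "(a, x) \<in> hexablock"
  shows "cmod a < 1"
proof -
  have "x \<in> tetrablock" "cmod a * hexa_sup x < 1" using assms by (auto simp: hexablock_iff)
  moreover have "cmod a * 1 \<le> cmod a * hexa_sup x"
    using hexa_sup_ge_1[OF \<open>x \<in> tetrablock\<close>] by (intro mult_left_mono) auto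
  ultimately show ?thesis by simp
qed

lemma tetrablock_if_in_hexablock: "(a, x) \<in> hexablock \<Longrightarrow> x \<in> tetrablock"
  by (simp add: hexablock_iff)

lemma zero_in_hexablock: "x \<in> tetrablock \<Longrightarrow> (0, x) \<in> hexablock"
  by (simp add: hexablock_iff)

lemma holomorphic_on_hexablock_fibre:
  assumes "holomorphic4 F hexablock" "x \<in> tetrablock"
  shows "(\<lambda>a. F (a, x)) holomorphic_on ball 0 (1 / hexa_sup x)"
proof -
  obtain x1 x2 x3 where x: "x = (x1, x2, x3)" by (cases x)
  have "(\<lambda>a. F (a, x1, x2, x3)) holomorphic_on ball 0 (1 / hexa_sup x)"
    by (rule holomorphic4_compose[OF assms(1) open_ball])
      (use hexablock_fibre_eq_ball[OF assms(2)] in \<open>auto simp: x intro: holomorphic_intros\<close>)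
  then show ?thesis by (simp add: x)
qed

section \<open>The scaling action on the tetrablock\<close>

definition tetra_scale :: "complex \<Rightarrow> c3 \<Rightarrow> c3" where
  "tetra_scale t x = (t * fst x, t * fst (snd x), t\<^sup>2 * snd (snd x))"

lemma Dx_tetra_scale: "Dx (tetra_scale t x) z w = Dx x (t * z) (t * w)"
  unfolding Dx_def tetra_scale_def by (simp add: power2_eq_square algebra_simps)

lemma tetra_scale_tetra_scale: "tetra_scale s (tetra_scale t x) = tetra_scale (s * t) x"
  unfolding tetra_scale_def by (simp add: power_mult_distrib algebra_simps)

lemma tetra_scale_1 [simp]: "tetra_scale 1 x = x"
  by (simp add: tetra_scale_def)

lemma tetra_scale_0 [simp]: "tetra_scale 0 x = (0, 0, 0)"
  by (simp add: tetra_scale_def)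

lemma continuous_on_tetra_scale [continuous_intros]:
  "continuous_on S f \<Longrightarrow> continuous_on S (\<lambda>s. tetra_scale (f s) x)"
  unfolding tetra_scale_def by (intro continuous_intros)

lemma continuous_tetra_scale [continuous_intros]:
  "continuous F f \<Longrightarrow> continuous F (\<lambda>s. tetra_scale (f s) x)"
  unfolding tetra_scale_def by (intro continuous_intros)

lemma tetra_scale_in_tetrablock:
  assumes "x \<in> tetrablock" "cmod t \<le> 1"
  shows "tetra_scale t x \<in> tetrablock"
  unfolding tetrablock_def
proof (intro CollectI allI impI)
  fix z w :: complex assume "cmod z \<le> 1" "cmod w \<le> 1"
  then have "cmod (t * z) \<le> 1" "cmod (t * w) \<le> 1"
    using assms(2) by (simp_all add: norm_mult mult_le_one)
  then show "Dx (tetra_scale t x) z w \<noteq> 0"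
    using assms(1) unfolding tetrablock_def Dx_tetra_scale by blast
qed

lemma hexa_sup_tetra_scale_le:
  assumes x: "x \<in> tetrablock" and t: "cmod t \<le> 1"
  shows "hexa_sup (tetra_scale t x) \<le> hexa_sup x"
proof (rule hexa_sup_le)
  fix z w :: complex assume zw: "cmod z < 1" "cmod w < 1"
  have tzw: "cmod (t * z) \<le> cmod z" "cmod (t * w) \<le> cmod w"
    using t by (simp_all add: norm_mult mult_left_le_one_le)
  then have tzw1: "cmod (t * z) < 1" "cmod (t * w) < 1" using zw by linarith+
  have "(cmod (t * z))\<^sup>2 \<le> (cmod z)\<^sup>2" "(cmod (t * w))\<^sup>2 \<le> (cmod w)\<^sup>2"
    using tzw by (simp_all add: power_mono)
  moreover have "0 \<le> 1 - (cmod w)\<^sup>2" "0 \<le> 1 - (cmod (t * z))\<^sup>2"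
    using zw tzw1 by (simp_all add: abs_square_le_1)
  ultimately have "(1 - (cmod z)\<^sup>2) * (1 - (cmod w)\<^sup>2) \<le> (1 - (cmod (t * z))\<^sup>2) * (1 - (cmod (t * w))\<^sup>2)"
    by (intro mult_mono) auto
  moreover have "Dx x (t * z) (t * w) \<noteq> 0"
    using x tzw1 unfolding tetrablock_def by auto
  ultimately have "hexa_quot (tetra_scale t x) z w \<le> hexa_quot x (t * z) (t * w)"
    unfolding hexa_quot_def Dx_tetra_scale by (intro divide_right_mono) auto
  also have "\<dots> \<le> hexa_sup x"
    by (rule hexa_quot_le_hexa_sup[OF x tzw1])
  finally show "hexa_quot (tetra_scale t x) z w \<le> hexa_sup x" .
qed

lemma origin_in_tetrablock: "(0, 0, 0) \<in> tetrablock"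
  unfolding tetrablock_def Dx_def by simp

lemma hexa_sup_origin: "hexa_sup (0, 0, 0) = 1"
proof (rule antisym)
  show "hexa_sup (0, 0, 0) \<le> 1"
    by (rule hexa_sup_le) (use bidisc_weight_bounds in \<open>simp add: hexa_quot_def Dx_def\<close>)
qed (rule hexa_sup_ge_1[OF origin_in_tetrablock])

lemma norm_fst_less_1_if_in_tetrablock:
  assumes "x \<in> tetrablock"
  shows "cmod (fst x) < 1"
proof (rule ccontr)
  assume "\<not> cmod (fst x) < 1"
  then have "cmod (1 / fst x) \<le> 1" "fst x \<noteq> 0"
    by (auto simp: norm_divide divide_le_eq_1)
  moreover have "Dx x (1 / fst x) 0 = 0" if "fst x \<noteq> 0"
    using that by (simp add: Dx_def)
  ultimately show False
    using assms unfolding tetrablock_def by auto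
qed

lemma hexa_sup_gt_1:
  assumes x: "x \<in> tetrablock" and nz: "fst x \<noteq> 0"
  shows "1 < hexa_sup x"
proof -
  define q where "q = 1 - (cmod (fst x))\<^sup>2"
  have q: "0 < q" "q < 1"
    using norm_fst_less_1_if_in_tetrablock[OF x] nz unfolding q_def
    by (auto simp: abs_square_less_1)
  have "Dx x (cnj (fst x)) 0 = of_real q"
    unfolding Dx_def q_def using complex_norm_square[of "fst x"] by simp
  then have "cmod (Dx x (cnj (fst x)) 0) = q"
    using q by simp
  then have "hexa_quot x (cnj (fst x)) 0 = sqrt q / q"
    by (simp add: hexa_quot_def q_def)
  moreover have "q * q < q * 1"
    using q by (intro mult_strict_left_mono) auto
  then have "q < sqrt q"
    by (intro real_less_rsqrt) (simp add: power2_eq_square)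
  ultimately have "1 < hexa_quot x (cnj (fst x)) 0"
    using q by simp
  then show ?thesis
    using hexa_quot_le_hexa_sup[OF x, of "cnj (fst x)" 0] norm_fst_less_1_if_in_tetrablock[OF x]
    by simp
qed

lemma tetra_scale_in_hexablock:
  assumes "(a, x) \<in> hexablock" "cmod t \<le> 1"
  shows "(a, tetra_scale t x) \<in> hexablock"
proof -
  have x: "x \<in> tetrablock" "cmod a * hexa_sup x < 1" using assms by (auto simp: hexablock_iff)
  have "cmod a * hexa_sup (tetra_scale t x) \<le> cmod a * hexa_sup x"
    using hexa_sup_tetra_scale_le[OF x(1) assms(2)] by (intro mult_left_mono) auto
  then show ?thesis using x tetra_scale_in_tetrablock[OF x(1) assms(2)] by (simp add: hexablock_iff)
qed

lemma in_hexablock_if_tetra_scale_in_hexablock: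
  assumes "(a, tetra_scale t x) \<in> hexablock" "1 \<le> cmod t"
  shows "(a, x) \<in> hexablock"
proof -
  have "cmod (1 / t) \<le> 1" "t \<noteq> 0" using assms(2) by (auto simp: norm_divide divide_le_eq_1)
  then show ?thesis
    using tetra_scale_in_hexablock[OF assms(1), of "1 / t"] by (simp add: tetra_scale_tetra_scale)
qed

lemma origin_fibre_hexablock: "(a, (0, 0, 0)) \<in> hexablock \<longleftrightarrow> cmod a < 1"
  by (simp add: hexablock_iff origin_in_tetrablock hexa_sup_origin)

lemma compact_tetra_scale_sublevel:
  assumes "x \<in> tetrablock"
  shows "compact {t \<in> cball 0 1. hexa_sup (tetra_scale t x) \<le> c}"
proof -
  have "continuous_on (cball 0 1) (\<lambda>t. hexa_sup (tetra_scale t x))"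
    using tetra_scale_in_tetrablock[OF assms]
    by (intro continuous_on_compose2[OF continuous_on_hexa_sup] continuous_intros) auto
  then have "closed {t \<in> cball 0 1. hexa_sup (tetra_scale t x) \<le> c}"
    by (intro continuous_on_closed_Collect_le continuous_on_const) auto
  moreover have "bounded {t \<in> cball 0 1. hexa_sup (tetra_scale t x) \<le> c}"
    by (rule bounded_subset[OF bounded_cball[of 0 1]]) auto
  ultimately show ?thesis by (simp add: compact_eq_bounded_closed)
qed

definition scale_slice :: "complex \<Rightarrow> c3 \<Rightarrow> complex set" where
  "scale_slice a x = {t. (a, tetra_scale t x) \<in> hexablock}"

lemma open_scale_slice: "open (scale_slice a x)"
proof -
  have "open ((\<lambda>t. (a, tetra_scale t x)) -` hexablock)"
    by (intro continuous_open_vimage open_hexablock continuous_intros)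
  then show ?thesis by (simp add: scale_slice_def vimage_def)
qed

lemma zero_in_scale_slice: "cmod a < 1 \<Longrightarrow> 0 \<in> scale_slice a x"
  by (simp add: scale_slice_def origin_fibre_hexablock)

lemma connected_scale_slice:
  assumes "cmod a < 1"
  shows "connected (scale_slice a x)"
proof (rule balanced_imp_connected)
  show "0 \<in> scale_slice a x" using assms by (rule zero_in_scale_slice)
next
  fix t u assume "t \<in> scale_slice a x" "cmod u \<le> 1"
  then show "u * t \<in> scale_slice a x"
    using tetra_scale_in_hexablock[of a "tetra_scale t x" u]
    by (simp add: scale_slice_def tetra_scale_tetra_scale)
qed

lemma scale_slice_subset_ball:
  assumes "(a, x) \<notin> hexablock"
  shows "scale_slice a x \<subseteq> ball 0 1"
  using assms in_hexablock_if_tetra_scale_in_hexablock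
  by (fastforce simp: scale_slice_def not_less)

lemma holomorphic_on_scale_slice:
  assumes "holomorphic4 F hexablock"
  shows "(\<lambda>t. F (a, tetra_scale t x)) holomorphic_on scale_slice a x"
  using holomorphic4_compose[OF assms open_scale_slice, where f = "\<lambda>_. a"
      and g = "\<lambda>t. t * fst x" and h = "\<lambda>t. t * fst (snd x)" and k = "\<lambda>t. t\<^sup>2 * snd (snd x)"]
  by (simp add: tetra_scale_def scale_slice_def holomorphic_intros)

definition scale_tube :: "c3 \<Rightarrow> real \<Rightarrow> real \<Rightarrow> c4 set" where
  "scale_tube x r c = (\<lambda>p. (fst p, tetra_scale (snd p) x)) `
     (cball 0 r \<times> {s \<in> cball 0 1. hexa_sup (tetra_scale s x) \<le> c})"

lemma compact_scale_tube: "x \<in> tetrablock \<Longrightarrow> compact (scale_tube x r c)"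
  unfolding scale_tube_def
  by (intro compact_continuous_image compact_Times compact_cball compact_tetra_scale_sublevel
      continuous_intros continuous_on_tetra_scale)

lemma scale_tube_subset_hexablock:
  assumes x: "x \<in> tetrablock" and "r * c < 1"
  shows "scale_tube x r c \<subseteq> hexablock"
proof
  fix p assume "p \<in> scale_tube x r c"
  then obtain b s where p: "p = (b, tetra_scale s x)" "cmod b \<le> r" "cmod s \<le> 1"
      "hexa_sup (tetra_scale s x) \<le> c"
    by (auto simp: scale_tube_def)
  have xs: "tetra_scale s x \<in> tetrablock" by (rule tetra_scale_in_tetrablock[OF x p(3)])
  have "0 \<le> r" using p(2) norm_ge_zero by (rule order_trans[rotated])
  then have "cmod b * hexa_sup (tetra_scale s x) \<le> r * c"
    using p hexa_sup_ge_1[OF xs] by (intro mult_mono) auto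
  with assms(2) xs show "p \<in> hexablock" by (simp add: p(1) hexablock_iff)
qed

section \<open>Proper holomorphic maps preserving the fibration\<close>

locale hexablock_fibre_map =
  fixes F :: "c4 \<Rightarrow> complex"
  assumes holomorphic: "holomorphic4 F hexablock"
    and proper: "proper_map (\<lambda>(a, x). (F (a, x), x)) hexablock hexablock"
begin

lemma map_in_hexablock: "(a, x) \<in> hexablock \<Longrightarrow> (F (a, x), x) \<in> hexablock"
  using proper unfolding proper_map_def by auto

lemma compact_preimage:
  assumes "compact K" "K \<subseteq> hexablock"
  shows "compact {p \<in> hexablock. (F p, snd p) \<in> K}"
proof -
  have "{p \<in> hexablock. (\<lambda>(a, x). (F (a, x), x)) p \<in> K} = {p \<in> hexablock. (F p, snd p) \<in> K}"
    by (auto simp: case_prod_beta)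
  moreover have "compact {p \<in> hexablock. (\<lambda>(a, x). (F (a, x), x)) p \<in> K}"
    using proper assms unfolding proper_map_def by blast
  ultimately show ?thesis by simp
qed

lemma zeros_bounded_away:
  assumes "compact C" "C \<subseteq> tetrablock"
  obtains m where "m < 1" "\<And>a x. (a, x) \<in> hexablock \<Longrightarrow> x \<in> C \<Longrightarrow> F (a, x) = 0 \<Longrightarrow> cmod a \<le> m"
proof -
  define P where "P = {p \<in> hexablock. (F p, snd p) \<in> {0} \<times> C}"
  have P: "compact P"
    unfolding P_def using assms zero_in_hexablock by (intro compact_preimage compact_Times) auto
  have "\<exists>m<1. \<forall>p\<in>P. cmod (fst p) \<le> m"
  proof (cases "P = {}")
    case False
    have "continuous_on P (\<lambda>p. cmod (fst p))" by (intro continuous_intros)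
    then obtain q where q: "q \<in> P" "\<forall>p\<in>P. cmod (fst p) \<le> cmod (fst q)"
      using continuous_attains_sup[OF P False] by blast
    have "cmod (fst q) < 1"
      using q(1) norm_less_1_if_in_hexablock[of "fst q" "snd q"] by (simp add: P_def)
    with q(2) show ?thesis by blast
  qed (auto intro: exI[of _ 0])
  then show thesis using that by (force simp: P_def)
qed

lemma compact_scale_slice_preimage:
  assumes "(a, x) \<notin> hexablock" "compact K" "K \<subseteq> hexablock"
  shows "compact {t \<in> scale_slice a x. (F (a, tetra_scale t x), tetra_scale t x) \<in> K}"
    (is "compact ?S")
proof -
  define P where "P = {p \<in> hexablock. (F p, snd p) \<in> K}"
  have "closed ((\<lambda>t. (a, tetra_scale t x)) -` P)"
    unfolding P_def using compact_preimage[OF assms(2,3)]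
    by (intro continuous_closed_vimage compact_imp_closed continuous_intros)
  moreover have "(\<lambda>t. (a, tetra_scale t x)) -` P = ?S"
    by (auto simp: P_def scale_slice_def)
  moreover have "bounded ?S"
    using scale_slice_subset_ball[OF assms(1)] by (intro bounded_subset[OF bounded_ball]) auto
  ultimately show ?thesis by (simp add: compact_eq_bounded_closed)
qed

lemma norm_le_on_scale_slice:
  assumes x: "x \<in> tetrablock" and a: "(a, x) \<notin> hexablock" and t: "t \<in> scale_slice a x"
  shows "cmod (F (a, tetra_scale t x)) \<le> cmod a"
proof (rule maximum_modulus_boundary_limsup[OF holomorphic_on_scale_slice[OF holomorphic] open_scale_slice _ t])
  fix \<epsilon> :: real assume \<epsilon>: "\<epsilon> > 0"
  define K where "K = {s \<in> cball 0 1. hexa_sup (tetra_scale s x) \<le> 1 / (cmod a + \<epsilon>)}"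
  have pos: "cmod a + \<epsilon> > 0" using \<epsilon> by (simp add: add_nonneg_pos)
  have "K \<subseteq> scale_slice a x"
  proof
    fix s assume "s \<in> K"
    then have s: "cmod s \<le> 1" "hexa_sup (tetra_scale s x) \<le> 1 / (cmod a + \<epsilon>)"
      by (auto simp: K_def)
    have "cmod a * hexa_sup (tetra_scale s x) \<le> cmod a / (cmod a + \<epsilon>)"
      using mult_left_mono[OF s(2) norm_ge_zero] by simp
    also have "\<dots> < 1" using pos \<epsilon> by (simp add: divide_less_eq)
    finally show "s \<in> scale_slice a x"
      using tetra_scale_in_tetrablock[OF x s(1)] by (simp add: scale_slice_def hexablock_iff)
  qed
  moreover have "cmod (F (a, tetra_scale s x)) \<le> cmod a + \<epsilon>" if s: "s \<in> scale_slice a x - K" for s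
  proof -
    have "cmod s < 1" using s scale_slice_subset_ball[OF a] by auto
    then have "1 / (cmod a + \<epsilon>) < hexa_sup (tetra_scale s x)"
      using s by (auto simp: K_def)
    then have "1 < (cmod a + \<epsilon>) * hexa_sup (tetra_scale s x)"
      using pos by (simp add: divide_less_eq mult.commute)
    moreover have "cmod (F (a, tetra_scale s x)) * hexa_sup (tetra_scale s x) < 1"
      using map_in_hexablock[of a "tetra_scale s x"] s by (simp add: scale_slice_def hexablock_iff)
    moreover have "0 < hexa_sup (tetra_scale s x)"
      using s hexa_sup_ge_1 tetrablock_if_in_hexablock by (fastforce simp: scale_slice_def)
    ultimately show ?thesis
      by (smt (verit) mult_right_less_imp_less)
  qed
  ultimately show "\<exists>K. compact K \<and> K \<subseteq> scale_slice a x \<and>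
      (\<forall>s\<in>scale_slice a x - K. cmod (F (a, tetra_scale s x)) \<le> cmod a + \<epsilon>)"
    using compact_tetra_scale_sublevel[OF x] unfolding K_def by blast
qed

lemma norm_ge_on_scale_slice:
  assumes x: "x \<in> tetrablock" and a: "(a, x) \<notin> hexablock"
    and nz: "\<And>s. s \<in> scale_slice a x \<Longrightarrow> F (a, tetra_scale s x) \<noteq> 0"
    and t: "t \<in> scale_slice a x"
  shows "cmod a \<le> cmod (F (a, tetra_scale t x))"
proof -
  have a0: "a \<noteq> 0" using a zero_in_hexablock[OF x] by auto
  have "cmod (1 / F (a, tetra_scale t x)) \<le> 1 / cmod a"
  proof (rule maximum_modulus_boundary_limsup[OF _ open_scale_slice _ t])
    show "(\<lambda>s. 1 / F (a, tetra_scale s x)) holomorphic_on scale_slice a x"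
      using nz by (intro holomorphic_intros holomorphic_on_scale_slice[OF holomorphic])
    fix \<epsilon> :: real assume \<epsilon>: "\<epsilon> > 0"
    define r where "r = 1 / (1 / cmod a + \<epsilon>)"
    have "0 < \<epsilon> * cmod a" using a0 \<epsilon> by simp
    then have r: "0 < r" "r * (1 / cmod a) < 1"
      using a0 by (auto simp: r_def field_simps)
    define L where "L = scale_tube x r (1 / cmod a)"
    \<comment> \<open>Properness confines the parameters where \<open>|F| \<le> r\<close> to the compact set \<open>B\<close>.\<close>
    define B where "B = {s \<in> scale_slice a x. (F (a, tetra_scale s x), tetra_scale s x) \<in> L}"
    have "compact B"
      unfolding B_def L_def
      by (intro compact_scale_slice_preimage[OF a] compact_scale_tube scale_tube_subset_hexablock x r)
    moreover have "cmod (1 / F (a, tetra_scale s x)) \<le> 1 / cmod a + \<epsilon>" if s: "s \<in> scale_slice a x - B" for s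
    proof -
      have "cmod s < 1" using s scale_slice_subset_ball[OF a] by auto
      moreover have "cmod a * hexa_sup (tetra_scale s x) < 1"
        using s by (simp add: scale_slice_def hexablock_iff)
      ultimately have "cmod s \<le> 1 \<and> hexa_sup (tetra_scale s x) \<le> 1 / cmod a"
        using a0 by (simp add: field_simps)
      then have "(F (a, tetra_scale s x), tetra_scale s x) \<in> L" if "cmod (F (a, tetra_scale s x)) \<le> r"
        using that unfolding L_def scale_tube_def by (intro image_eqI[of _ _ "(F (a, tetra_scale s x), s)"]) auto
      then have "r < cmod (F (a, tetra_scale s x))" using s by (force simp: B_def)
      then have "1 / cmod (F (a, tetra_scale s x)) \<le> 1 / r"
        using r by (intro divide_left_mono mult_pos_pos) auto
      then show ?thesis by (simp add: r_def norm_divide)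
    qed
    ultimately show "\<exists>K. compact K \<and> K \<subseteq> scale_slice a x \<and>
        (\<forall>s\<in>scale_slice a x - K. cmod (1 / F (a, tetra_scale s x)) \<le> 1 / cmod a + \<epsilon>)"
      unfolding B_def by blast
  qed
  then show ?thesis using nz[OF t] a0 by (simp add: norm_divide field_simps)
qed

lemma constant_on_scale_slice:
  assumes x: "x \<in> tetrablock" and a: "(a, x) \<notin> hexablock" "cmod a < 1"
    and nz: "\<And>s. s \<in> scale_slice a x \<Longrightarrow> F (a, tetra_scale s x) \<noteq> 0"
    and t: "t \<in> scale_slice a x"
  shows "F (a, tetra_scale t x) = F (a, (0, 0, 0))" "cmod (F (a, (0, 0, 0))) = cmod a"
proof -
  have norm_eq: "cmod (F (a, tetra_scale s x)) = cmod a" if "s \<in> scale_slice a x" for s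
    using norm_le_on_scale_slice[OF x a(1) that] norm_ge_on_scale_slice[OF x a(1) nz that] by simp
  have 0: "0 \<in> scale_slice a x" by (rule zero_in_scale_slice[OF a(2)])
  have "(\<lambda>s. F (a, tetra_scale s x)) constant_on scale_slice a x"
    using norm_eq norm_eq[OF 0]
    by (intro maximum_modulus_principle[OF holomorphic_on_scale_slice[OF holomorphic]
          open_scale_slice connected_scale_slice[OF a(2)] open_scale_slice order_refl 0])
      (simp del: tetra_scale_0)
  then show "F (a, tetra_scale t x) = F (a, (0, 0, 0))"
    using t 0 unfolding constant_on_def by (metis tetra_scale_0)
  show "cmod (F (a, (0, 0, 0))) = cmod a" using norm_eq[OF 0] by simp
qed

lemma scale_slice_rigidity:
  assumes x: "x \<in> tetrablock" and nz: "fst x \<noteq> 0"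
  obtains \<kappa> where "0 < \<kappa>" "\<kappa> < 1"
    "\<And>a t. \<kappa> < cmod a \<Longrightarrow> (a, tetra_scale t x) \<in> hexablock \<Longrightarrow>
       F (a, tetra_scale t x) = F (a, (0, 0, 0)) \<and> cmod (F (a, (0, 0, 0))) = cmod a"
proof -
  let ?C = "(\<lambda>t. tetra_scale t x) ` cball 0 1"
  have "compact ?C"
    by (intro compact_continuous_image continuous_intros continuous_on_tetra_scale compact_cball)
  moreover have "?C \<subseteq> tetrablock" using tetra_scale_in_tetrablock[OF x] by auto
  ultimately obtain m where m: "m < 1"
    and zeros: "\<And>a y. (a, y) \<in> hexablock \<Longrightarrow> y \<in> ?C \<Longrightarrow> F (a, y) = 0 \<Longrightarrow> cmod a \<le> m"
    by (rule zeros_bounded_away) auto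
  have S: "1 < hexa_sup x" by (rule hexa_sup_gt_1[OF x nz])
  define \<kappa> where "\<kappa> = max (max m (1 / hexa_sup x)) (1 / 2)"
  have \<kappa>: "0 < \<kappa>" "\<kappa> < 1" using m S by (auto simp: \<kappa>_def)
  show thesis
  proof (rule that[OF \<kappa>], intro conjI)
    fix a t assume a: "\<kappa> < cmod a" and at: "(a, tetra_scale t x) \<in> hexablock"
    have "1 / hexa_sup x < cmod a" using a by (simp add: \<kappa>_def)
    then have "(a, x) \<notin> hexablock" using S by (simp add: hexablock_iff field_simps)
    moreover have "cmod a < 1" by (rule norm_less_1_if_in_hexablock[OF at])
    moreover have "F (a, tetra_scale s x) \<noteq> 0" if "s \<in> scale_slice a x" for s
    proof
      assume "F (a, tetra_scale s x) = 0"
      moreover have "tetra_scale s x \<in> ?C"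
        using that scale_slice_subset_ball[OF \<open>(a, x) \<notin> hexablock\<close>] by auto
      ultimately have "cmod a \<le> m" using that by (intro zeros) (auto simp: scale_slice_def)
      then show False using a by (simp add: \<kappa>_def)
    qed
    moreover have "t \<in> scale_slice a x" using at by (simp add: scale_slice_def)
    ultimately show "F (a, tetra_scale t x) = F (a, (0, 0, 0))" "cmod (F (a, (0, 0, 0))) = cmod a"
      using constant_on_scale_slice[OF x] by blast+
  qed
qed

lemma origin_fibre_is_rotation:
  obtains c where "cmod c = 1" "\<And>a. cmod a < 1 \<Longrightarrow> F (a, (0, 0, 0)) = c * a"
proof -
  define x :: c3 where "x = (1 / 2, 0, 0)"
  have "Dx x z w \<noteq> 0" if "cmod z \<le> 1" for z w
  proof
    assume "Dx x z w = 0"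
    then have "z = 2" by (simp add: Dx_def x_def field_simps)
    with that show False by simp
  qed
  then have x: "x \<in> tetrablock" by (simp add: tetrablock_def)
  obtain \<kappa> where \<kappa>: "0 < \<kappa>" "\<kappa> < 1"
    and rigid: "\<And>a t. \<kappa> < cmod a \<Longrightarrow> (a, tetra_scale t x) \<in> hexablock \<Longrightarrow>
       F (a, tetra_scale t x) = F (a, (0, 0, 0)) \<and> cmod (F (a, (0, 0, 0))) = cmod a"
    using scale_slice_rigidity[OF x] by (auto simp: x_def)
  have "(\<lambda>a. F (a, (0, 0, 0))) holomorphic_on ball 0 1"
    using holomorphic_on_hexablock_fibre[OF holomorphic origin_in_tetrablock] by (simp add: hexa_sup_origin)
  moreover have "cmod (F (a, (0, 0, 0))) = cmod a" if "\<kappa> < cmod a" "cmod a < 1" for a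
    using rigid[of a 0] that by (simp add: origin_fibre_hexablock)
  ultimately show thesis
    using rotation_if_norm_eq_on_annulus[of "\<lambda>a. F (a, (0, 0, 0))" \<kappa>] \<kappa> that by auto
qed

context
  fixes c :: complex
  assumes origin_rotation: "\<And>a. cmod a < 1 \<Longrightarrow> F (a, (0, 0, 0)) = c * a"
begin

lemma eq_rotation_near_origin_fibre:
  assumes x: "x \<in> tetrablock" and nz: "fst x \<noteq> 0"
  obtains U where "open U" "0 \<in> U"
    "\<And>t b. t \<in> U \<Longrightarrow> (b, tetra_scale t x) \<in> hexablock \<Longrightarrow> F (b, tetra_scale t x) = c * b"
proof -
  obtain \<kappa> where \<kappa>: "0 < \<kappa>" "\<kappa> < 1"
    and rigid: "\<And>a t. \<kappa> < cmod a \<Longrightarrow> (a, tetra_scale t x) \<in> hexablock \<Longrightarrow>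
       F (a, tetra_scale t x) = F (a, (0, 0, 0)) \<and> cmod (F (a, (0, 0, 0))) = cmod a"
    using scale_slice_rigidity[OF x nz] by blast
  define U where "U = ball 0 1 \<inter> (\<lambda>t. hexa_sup (tetra_scale t x)) -` {..<1 / \<kappa>}"
  have "continuous_on (ball 0 1) (\<lambda>t. hexa_sup (tetra_scale t x))"
    using tetra_scale_in_tetrablock[OF x]
    by (intro continuous_on_compose2[OF continuous_on_hexa_sup] continuous_intros) auto
  then have "open U" unfolding U_def by (rule continuous_open_preimage) auto
  moreover have "0 \<in> U" using \<kappa> by (simp add: U_def hexa_sup_origin)
  moreover have "F (b, tetra_scale t x) = c * b"
    if t: "t \<in> U" and b: "(b, tetra_scale t x) \<in> hexablock" for t b
  proof -
    let ?y = "tetra_scale t x"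
    have y: "?y \<in> tetrablock" using t tetra_scale_in_tetrablock[OF x] by (simp add: U_def)
    define \<rho> where "\<rho> = 1 / hexa_sup ?y"
    have "\<kappa> < \<rho>" using t hexa_sup_ge_1[OF y] \<kappa> by (simp add: U_def \<rho>_def field_simps)
    have fibre: "{b. (b, ?y) \<in> hexablock} = ball 0 \<rho>"
      unfolding \<rho>_def by (rule hexablock_fibre_eq_ball[OF y])
    show ?thesis
    proof (rule holomorphic_eq_if_eq_on_annulus[of "\<lambda>b. F (b, ?y)" \<rho> "\<lambda>b. c * b" \<kappa>])
      show "(\<lambda>b. F (b, ?y)) holomorphic_on ball 0 \<rho>"
        unfolding \<rho>_def by (rule holomorphic_on_hexablock_fibre[OF holomorphic y])
      show "(\<lambda>b. c * b) holomorphic_on ball 0 \<rho>" by (intro holomorphic_intros)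
      show "0 \<le> \<kappa>" "\<kappa> < \<rho>" using \<kappa> \<open>\<kappa> < \<rho>\<close> by auto
      show "cmod b < \<rho>" using b fibre by auto
    next
      fix b' assume b': "\<kappa> < cmod b'" "cmod b' < \<rho>"
      then have "(b', ?y) \<in> hexablock" using fibre by auto
      then have "F (b', ?y) = F (b', (0, 0, 0))" "cmod b' < 1"
        using rigid[OF b'(1)] by (simp_all add: norm_less_1_if_in_hexablock)
      then show "F (b', ?y) = c * b'" using origin_rotation by simp
    qed
  qed
  ultimately show thesis by (rule that)
qed

lemma eq_rotation_if_fst_nonzero:
  assumes ax: "(a, x) \<in> hexablock" and nz: "fst x \<noteq> 0"
  shows "F (a, x) = c * a"
proof -
  have a: "cmod a < 1" by (rule norm_less_1_if_in_hexablock[OF ax])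
  obtain U where U: "open U" "0 \<in> U"
    and near: "\<And>t b. t \<in> U \<Longrightarrow> (b, tetra_scale t x) \<in> hexablock \<Longrightarrow> F (b, tetra_scale t x) = c * b"
    using eq_rotation_near_origin_fibre[OF tetrablock_if_in_hexablock[OF ax] nz] by blast
  have "F (a, tetra_scale 1 x) = c * a"
  proof (rule analytic_continuation_open[of "U \<inter> scale_slice a x" "scale_slice a x"
        "\<lambda>t. F (a, tetra_scale t x)" "\<lambda>_. c * a"])
    show "U \<inter> scale_slice a x \<noteq> {}" using U zero_in_scale_slice[OF a, of x] by auto
    show "(\<lambda>t. F (a, tetra_scale t x)) holomorphic_on scale_slice a x"
      by (rule holomorphic_on_scale_slice[OF holomorphic])
    show "\<And>t. t \<in> U \<inter> scale_slice a x \<Longrightarrow> F (a, tetra_scale t x) = c * a"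
      using near by (auto simp: scale_slice_def)
    show "open (U \<inter> scale_slice a x)" using U(1) open_scale_slice by (rule open_Int)
    show "1 \<in> scale_slice a x" using ax by (simp add: scale_slice_def)
  qed (simp_all add: open_scale_slice connected_scale_slice[OF a])
  then show ?thesis by simp
qed

lemma eq_rotation:
  assumes ax: "(a, x) \<in> hexablock"
  shows "F (a, x) = c * a"
proof (cases "fst x = 0")
  case False
  then show ?thesis by (rule eq_rotation_if_fst_nonzero[OF ax])
next
  case True
  then obtain x2 x3 where x: "x = (0, x2, x3)" by (cases x) auto
  have line: "\<And>s. continuous (at s) (\<lambda>s. (a, (s, x2, x3)))" by (intro continuous_intros)
  have "(a, (0, x2, x3)) \<in> hexablock" using ax x by simp
  then have "isCont F (a, (0, x2, x3))" by (rule isCont_if_holomorphic4[OF holomorphic])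
  then have "isCont (\<lambda>s. F (a, (s, x2, x3))) 0" using isCont_o2[OF line[of 0], of F] by simp
  moreover have "eventually (\<lambda>s. F (a, (s, x2, x3)) = c * a) (at 0)"
    unfolding eventually_at_topological
  proof (intro exI conjI ballI impI)
    show "open ((\<lambda>s. (a, (s, x2, x3))) -` hexablock)"
      by (rule continuous_open_vimage[OF open_hexablock line])
    show "0 \<in> (\<lambda>s. (a, (s, x2, x3))) -` hexablock" using ax x by simp
    fix s :: complex assume "s \<in> (\<lambda>s. (a, (s, x2, x3))) -` hexablock" "s \<noteq> 0"
    then show "F (a, (s, x2, x3)) = c * a" using eq_rotation_if_fst_nonzero by simp
  qed
  ultimately show ?thesis
    using eq_if_isCont_eventually_eq[where f = "\<lambda>s. F (a, (s, x2, x3))" and z = 0] x by simp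
qed

end

end

theorem mainTheorem8:
  fixes F1 :: "c4 \<Rightarrow> complex"
  assumes "holomorphic4 F1 hexablock"
    and "proper_map (\<lambda>(a, x). (F1 (a, x), x)) hexablock hexablock"
  shows "\<exists>\<theta>::real. \<forall>a x. (a, x) \<in> hexablock \<longrightarrow> F1 (a, x) = exp (\<i> * of_real \<theta>) * a"
proof -
  interpret hexablock_fibre_map F1 using assms by unfold_locales
  obtain c where c: "cmod c = 1" "\<And>a. cmod a < 1 \<Longrightarrow> F1 (a, (0, 0, 0)) = c * a"
    using origin_fibre_is_rotation by blast
  have "c \<noteq> 0" using c(1) by auto
  then have "exp (\<i> * of_real (Arg c)) = c"
    using cis_Arg[of c] c(1) by (simp add: cis_conv_exp[symmetric] sgn_div_norm)
  then show ?thesis using eq_rotation[OF c(2)] by (intro exI[of _ "Arg c"]) simp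
qed

end
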